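(* Let $r\ge3$. For any partition $\mathcal{Q}$ of $[r]=\{1,\dots,r\}$ with $|\mathcal{Q}|\ge2$, there exists a bijection $\tau:\mathfrak{P}_{[r]}\to\mathfrak{P}_{[r]}$ such that $|\tau(\mathcal{P})|\equiv|\mathcal{P}|+1\pmod 2$ for every $\mathcal{P}\in\mathfrak{P}_{[r]}$, and $\widetilde\psi^{\mathcal{Q}}\circ\tau=\widetilde\psi^{\mathcal{Q}}$ for every $\psi:2^{[r]}\to\mathbb{R}$ with $\psi(\emptyset)=1$.
   Context: $\mathfrak{P}_{[r]}$ is the set of cyclically ordered partitions of $[r]$ (partitions into non-empty blocks with a cyclic order on the blocks; two such are equal if they have the same blocks and the same cyclic order), $|\mathcal{P}|$ the number of blocks. For a partition $\mathcal{Q}$ of $[r]$, $\psi^{\mathcal{Q}}(I)=\prod_{J\in\mathcal{Q}}\psi(I\cap J)$ and $\widetilde\psi^{\mathcal{Q}}(\mathcal{P})=\prod_{I\in\mathcal{P}}\psi^{\mathcal{Q}}(I)$. *)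

theory Defs
  imports Complex_Main "HOL-Library.Disjoint_Sets" "HOL-Combinatorics.Permutations"
begin

text \<open>A cyclically ordered partition of [r] = {1..r} is represented as a pair (P, s) where
  P is a set partition of {1..r} into non-empty blocks and s is a cyclic permutation of the
  blocks (s B is the successor of block B in the cyclic order; s is the identity outside P).\<close>

definition cyc_ord_partitions :: "nat \<Rightarrow> (nat set set \<times> (nat set \<Rightarrow> nat set)) set" where
  "cyc_ord_partitions r =
     {(P, s). partition_on {1..r} P \<and> s permutes P \<and>
              (\<forall>B\<in>P. \<forall>C\<in>P. \<exists>n. (s ^^ n) B = C)}"

definition nblocks :: "nat set set \<times> (nat set \<Rightarrow> nat set) \<Rightarrow> nat" where
  "nblocks P = card (fst P)"

definition psiQ :: "(nat set \<Rightarrow> real) \<Rightarrow> nat set set \<Rightarrow> nat set \<Rightarrow> real" where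
  "psiQ \<psi> Q I = (\<Prod>J\<in>Q. \<psi> (I \<inter> J))"

definition psiQ_tilde :: "(nat set \<Rightarrow> real) \<Rightarrow> nat set set \<Rightarrow> nat set set \<times> (nat set \<Rightarrow> nat set) \<Rightarrow> real" where
  "psiQ_tilde \<psi> Q P = (\<Prod>I\<in>fst P. psiQ \<psi> Q I)"

end

theory Submission
  imports Defs "HOL-Combinatorics.Orbits"
begin

text \<open>Cutting a cyclic order open at the block containing 1 identifies cyclically ordered
  partitions with ordered partitions (lists of blocks) whose first block contains 1. Let J be
  the block of Q containing 1; since |Q| \<ge> 2, J is a proper subset of [r]. Walk along the list
  while the current block lies in J and the next one meets J. The walk stops either at a block
  B straddling J, which is split into B \<inter> J, B - J, or at a block B \<subseteq> J followed by a
  block C disjoint from J, and then B, C are merged. The first block meets J, so the walk starts,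
  and a split creates exactly the configuration that the merge undoes and vice versa: this is an
  involution changing the number of blocks by one. It preserves \<psi>^Q-products because
  \<psi>^Q(X) = \<psi>^Q(X \<inter> J) \<psi>^Q(X - J) when \<psi>(\<emptyset>) = 1.\<close>

fun ordered_partition :: "'a set list \<Rightarrow> 'a set \<Rightarrow> bool" where
  "ordered_partition [] A \<longleftrightarrow> A = {}"
| "ordered_partition (B # Bs) A \<longleftrightarrow> B \<noteq> {} \<and> B \<subseteq> A \<and> ordered_partition Bs (A - B)"

lemma ordered_partition_iff:
  "ordered_partition Bs A \<longleftrightarrow> distinct Bs \<and> partition_on A (set Bs)"
proof (induction Bs arbitrary: A)
  case Nil
  then show ?case by (auto simp: partition_on_def)
next
  case (Cons B Bs)
  have "disjnt B (\<Union>(set Bs))"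
    if "B \<notin> set Bs" "disjoint (insert B (set Bs))"
    using that by (auto simp: disjnt_def disjoint_def)
  moreover have "disjnt B (\<Union>(set Bs))" "B \<notin> set Bs"
    if "B \<noteq> {}" "partition_on (A - B) (set Bs)"
    using that by (auto simp: disjnt_def partition_on_def)
  ultimately show ?case
    using Cons.IH partition_on_insert[of B "set Bs" A] by (auto dest: partition_onD2)
qed

definition straddles :: "'a set \<Rightarrow> 'a set \<Rightarrow> bool" where
  "straddles J B \<longleftrightarrow> B \<inter> J \<noteq> {} \<and> \<not> B \<subseteq> J"

fun split_merge :: "'a set \<Rightarrow> 'a set list \<Rightarrow> 'a set list" where
  "split_merge J [] = []"
| "split_merge J [B] = (if straddles J B then [B \<inter> J, B - J] else [B])"
| "split_merge J (B # C # Bs) =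
     (if straddles J B then (B \<inter> J) # (B - J) # C # Bs
      else if B \<subseteq> J \<and> C \<inter> J = {} then (B \<union> C) # Bs
      else B # split_merge J (C # Bs))"

lemma ordered_partition_split_merge:
  "ordered_partition Bs A \<Longrightarrow> ordered_partition (split_merge J Bs) A"
proof (induction J Bs arbitrary: A rule: split_merge.induct)
  case (3 J B C Bs)
  have "A - B \<inter> J - (B - J) = A - B" "A - (B \<union> C) = A - B - C" by blast+
  with 3 show ?case by (auto simp: straddles_def)
qed (auto simp: straddles_def)

lemma split_merge_eq_Nil_iff [simp]: "split_merge J Bs = [] \<longleftrightarrow> Bs = []"
  by (induction J Bs rule: split_merge.induct) auto

lemma hd_split_merge_disjoint_iff:
  "ordered_partition Bs A \<Longrightarrow> Bs \<noteq> [] \<Longrightarrow>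
     hd (split_merge J Bs) \<inter> J = {} \<longleftrightarrow> hd Bs \<inter> J = {}"
  by (induction J Bs arbitrary: A rule: split_merge.induct) (auto simp: straddles_def)

lemma hd_split_merge:
  "x \<in> hd Bs \<Longrightarrow> x \<in> J \<Longrightarrow> Bs \<noteq> [] \<Longrightarrow> x \<in> hd (split_merge J Bs)"
  by (induction J Bs rule: split_merge.induct) auto

lemma split_merge_involution:
  "ordered_partition Bs A \<Longrightarrow> split_merge J (split_merge J Bs) = Bs"
proof (induction J Bs arbitrary: A rule: split_merge.induct)
  case (2 J B)
  have "B \<inter> J \<union> (B - J) = B" by blast
  then show ?case by (auto simp: straddles_def)
next
  case (3 J B C Bs)
  show ?case
  proof (cases "straddles J B")
    case True
    have "B \<inter> J \<union> (B - J) = B" by blast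
    with True show ?thesis by (auto simp: straddles_def)
  next
    case not_straddle: False
    show ?thesis
    proof (cases "B \<subseteq> J \<and> C \<inter> J = {}")
      case True
      moreover have "B \<noteq> {}" "C \<noteq> {}" using "3.prems" by auto
      ultimately have "straddles J (B \<union> C)" "(B \<union> C) \<inter> J = B" "B \<union> C - J = C"
        by (auto simp: straddles_def)
      with not_straddle True show ?thesis by (cases Bs) auto
    next
      case False
      have rest: "ordered_partition (C # Bs) (A - B)" using "3.prems" by auto
      obtain C' Bs' where C': "split_merge J (C # Bs) = C' # Bs'"
        by (cases "split_merge J (C # Bs)") auto
      have "C' \<inter> J = {} \<longleftrightarrow> C \<inter> J = {}"
        using hd_split_merge_disjoint_iff[OF rest, of J] C' by simp
      with not_straddle False C' "3.IH"[OF not_straddle False rest] show ?thesis by auto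
    qed
  qed
qed auto

lemma length_split_merge:
  "ordered_partition Bs A \<Longrightarrow> hd Bs \<inter> J \<noteq> {} \<Longrightarrow> \<not> A \<subseteq> J \<Longrightarrow>
     length (split_merge J Bs) = Suc (length Bs) \<or> Suc (length (split_merge J Bs)) = length Bs"
proof (induction J Bs arbitrary: A rule: split_merge.induct)
  case (3 J B C Bs)
  show ?case
  proof (cases "\<not> straddles J B \<and> \<not> (B \<subseteq> J \<and> C \<inter> J = {})")
    case True
    with "3.prems" have "ordered_partition (C # Bs) (A - B)" "C \<inter> J \<noteq> {}" "\<not> A - B \<subseteq> J"
      by (auto simp: straddles_def)
    with True "3.IH" show ?thesis by auto
  qed auto
qed (auto simp: straddles_def)

(* The factorisation is a premise rather than an assumption because split_merge.induct
   generalises J. *)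
lemma prod_list_split_merge:
  fixes F :: "'a set \<Rightarrow> 'b :: comm_monoid_mult"
  shows "(\<And>X. F X = F (X \<inter> J) * F (X - J)) \<Longrightarrow>
           prod_list (map F (split_merge J Bs)) = prod_list (map F Bs)"
proof (induction J Bs rule: split_merge.induct)
  case (2 J B)
  show ?case using "2.prems"[of B] by simp
next
  case (3 J B C Bs)
  show ?case
  proof (cases "straddles J B")
    case True
    then show ?thesis using "3.prems"[of B] by (simp add: mult.assoc)
  next
    case not_straddle: False
    show ?thesis
    proof (cases "B \<subseteq> J \<and> C \<inter> J = {}")
      case True
      then have "(B \<union> C) \<inter> J = B" "B \<union> C - J = C" by blast+
      with not_straddle True show ?thesis using "3.prems"[of "B \<union> C"] by (simp add: mult.assoc)
    next
      case False
      with not_straddle show ?thesis by (auto simp add: "3.IH"[OF not_straddle False "3.prems"])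
    qed
  qed
qed simp

definition cyclic_successor :: "'a list \<Rightarrow> 'a \<Rightarrow> 'a" where
  "cyclic_successor xs x = (case map_of (zip xs (rotate1 xs)) x of None \<Rightarrow> x | Some y \<Rightarrow> y)"

lemma cyclic_successor_nth:
  "distinct xs \<Longrightarrow> i < length xs \<Longrightarrow> cyclic_successor xs (xs ! i) = xs ! (Suc i mod length xs)"
  unfolding cyclic_successor_def by (simp add: map_of_zip_nth nth_rotate1)

lemma cyclic_successor_not_in:
  assumes "x \<notin> set xs"
  shows "cyclic_successor xs x = x"
proof -
  have "map_of (zip xs (rotate1 xs)) x = None"
    using assms by (auto simp: map_of_eq_None_iff dest: set_zip_leftD)
  then show ?thesis unfolding cyclic_successor_def by (simp only: option.case)
qed

lemma funpow_cyclic_successor_nth: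
  assumes "distinct xs" "i < length xs"
  shows "(cyclic_successor xs ^^ m) (xs ! i) = xs ! ((i + m) mod length xs)"
proof (induction m)
  case (Suc m)
  have "(i + m) mod length xs < length xs" using assms(2) by (auto intro: mod_less_divisor)
  then show ?case
    using Suc assms(1) by (simp add: cyclic_successor_nth mod_Suc_eq)
qed (use assms in simp)

lemma cyclic_successor_permutes:
  assumes "distinct xs"
  shows "cyclic_successor xs permutes set xs"
proof (rule bij_imp_permutes)
  let ?n = "length xs"
  have "cyclic_successor xs ` set xs = set xs"
  proof
    show "cyclic_successor xs ` set xs \<subseteq> set xs"
    proof
      fix y assume "y \<in> cyclic_successor xs ` set xs"
      then obtain i where i: "i < ?n" "y = cyclic_successor xs (xs ! i)" by (auto simp: in_set_conv_nth)
      then have "Suc i mod ?n < ?n" by (intro mod_less_divisor) linarith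
      with i show "y \<in> set xs" using assms by (simp add: cyclic_successor_nth)
    qed
    show "set xs \<subseteq> cyclic_successor xs ` set xs"
    proof
      fix y assume "y \<in> set xs"
      then obtain j where j: "j < ?n" "y = xs ! j" by (auto simp: in_set_conv_nth)
      have "0 < ?n" using j by linarith
      then have "(j + ?n - 1) mod ?n < ?n" and "Suc ((j + ?n - 1) mod ?n) mod ?n = j"
        using j by (simp_all add: mod_Suc_eq Suc_diff_le)
      then show "y \<in> cyclic_successor xs ` set xs"
        using assms j by (metis cyclic_successor_nth image_eqI nth_mem)
    qed
  qed
  then show "bij_betw (cyclic_successor xs) (set xs) (set xs)"
    by (simp add: bij_betw_def finite_surj_inj)
qed (rule cyclic_successor_not_in)

lemma cyclic_successor_transitive:
  assumes "distinct xs" "x \<in> set xs" "y \<in> set xs"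
  shows "\<exists>m. (cyclic_successor xs ^^ m) x = y"
proof -
  obtain i j where ij: "i < length xs" "x = xs ! i" "j < length xs" "y = xs ! j"
    using assms(2,3) by (auto simp: in_set_conv_nth)
  then have "(cyclic_successor xs ^^ (j + length xs - i)) x = xs ! ((j + length xs) mod length xs)"
    using funpow_cyclic_successor_nth[OF assms(1)] by simp
  with ij show ?thesis by auto
qed

lemma list_eq_if_cyclic_successor_eq:
  assumes "distinct xs" "distinct ys" "set xs = set ys" "xs \<noteq> []" "hd xs = hd ys"
    and "cyclic_successor xs = cyclic_successor ys"
  shows "xs = ys"
proof (rule nth_equalityI)
  show len: "length xs = length ys"
    using assms(1-3) distinct_card by metis
  have "ys \<noteq> []" using assms(3,4) by auto
  have "i < length xs \<longrightarrow> xs ! i = ys ! i" for i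
  proof (induction i)
    case 0
    then show ?case using assms(4,5) \<open>ys \<noteq> []\<close> by (auto simp: hd_conv_nth)
  next
    case (Suc i)
    then show ?case
      using cyclic_successor_nth[OF assms(1), of i] cyclic_successor_nth[OF assms(2), of i] assms(6) len
      by auto
  qed
  then show "i < length xs \<Longrightarrow> xs ! i = ys ! i" for i by blast
qed

lemma orbit_eq_if_transitive:
  assumes s: "s permutes S" "finite S" "\<forall>x\<in>S. \<forall>y\<in>S. \<exists>m. (s ^^ m) x = y" and "a \<in> S"
  shows "orbit s a = S"
proof -
  have "permutation s" using s(1,2) permutation_permutes by blast
  then have orbit: "orbit s a = {(s ^^ m) a | m. True}" by (rule orbit_altdef_permutation)
  show ?thesis
  proof
    show "orbit s a \<subseteq> S" using orbit s(1) \<open>a \<in> S\<close> by (auto intro: permutes_in_funpow_image)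
    show "S \<subseteq> orbit s a" using orbit s(3) \<open>a \<in> S\<close> by fastforce
  qed
qed

lemma ex_list_cyclic_successor_eq:
  assumes s: "s permutes S" "finite S" "\<forall>x\<in>S. \<forall>y\<in>S. \<exists>m. (s ^^ m) x = y" and "a \<in> S"
  obtains xs where "distinct xs" "set xs = S" "hd xs = a" "cyclic_successor xs = s"
proof
  have "orbit s a = S" using orbit_eq_if_transitive[OF assms] .
  then have a_orbit: "a \<in> orbit s a" using \<open>a \<in> S\<close> by simp
  define n where "n = funpow_dist1 s a a"
  define xs where "xs = map (\<lambda>i. (s ^^ i) a) [0..<n]"
  have "inj_on (\<lambda>i. (s ^^ i) a) {0..<n}"
    unfolding n_def by (rule inj_on_funpow_dist1[OF a_orbit])
  then show "distinct xs" by (simp add: xs_def distinct_map)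
  have "(\<lambda>i. (s ^^ i) a) ` {0..<n} = S"
    unfolding n_def using orbit_conv_funpow_dist1[OF a_orbit] \<open>orbit s a = S\<close> by simp
  then show set_xs: "set xs = S" by (simp add: xs_def)
  have "0 < n" by (simp add: n_def)
  then show "hd xs = a" by (simp add: xs_def hd_map)
  have period: "(s ^^ n) a = a" using funpow_dist1_prop[OF a_orbit] by (simp add: n_def)
  show "cyclic_successor xs = s"
  proof
    fix x
    show "cyclic_successor xs x = s x"
    proof (cases "x \<in> S")
      case True
      then obtain i where i: "i < n" "x = xs ! i" using set_xs by (auto simp: in_set_conv_nth xs_def)
      have "cyclic_successor xs x = xs ! (Suc i mod n)"
        using i \<open>distinct xs\<close> cyclic_successor_nth[of xs i] by (simp add: xs_def)
      also have "\<dots> = (s ^^ (Suc i mod n)) a"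
        using \<open>0 < n\<close> by (simp add: xs_def)
      also have "\<dots> = s x" using i funpow_mod_eq[OF period] by (simp add: xs_def)
      finally show ?thesis .
    qed (use set_xs s(1) in \<open>simp add: cyclic_successor_not_in permutes_not_in\<close>)
  qed
qed

definition cyclic_partitions :: "'a set \<Rightarrow> ('a set set \<times> ('a set \<Rightarrow> 'a set)) set" where
  "cyclic_partitions A =
     {(P, s). partition_on A P \<and> s permutes P \<and> (\<forall>B\<in>P. \<forall>C\<in>P. \<exists>n. (s ^^ n) B = C)}"

definition rooted_ordered_partitions :: "'a set \<Rightarrow> 'a \<Rightarrow> 'a set list set" where
  "rooted_ordered_partitions A a = {Bs. ordered_partition Bs A \<and> Bs \<noteq> [] \<and> a \<in> hd Bs}"

definition cyclic_of_list :: "'a set list \<Rightarrow> 'a set set \<times> ('a set \<Rightarrow> 'a set)" where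
  "cyclic_of_list Bs = (set Bs, cyclic_successor Bs)"

lemma inj_on_cyclic_of_list: "inj_on cyclic_of_list (rooted_ordered_partitions A a)"
proof (rule inj_onI)
  fix Bs Cs
  assume "Bs \<in> rooted_ordered_partitions A a" "Cs \<in> rooted_ordered_partitions A a"
    and eq: "cyclic_of_list Bs = cyclic_of_list Cs"
  then have Bs: "distinct Bs" "partition_on A (set Bs)" "Bs \<noteq> []" "a \<in> hd Bs"
    and Cs: "distinct Cs" "Cs \<noteq> []" "a \<in> hd Cs"
    by (auto simp: rooted_ordered_partitions_def ordered_partition_iff)
  have sets: "set Bs = set Cs" and succ: "cyclic_successor Bs = cyclic_successor Cs"
    using eq by (simp_all add: cyclic_of_list_def)
  have "hd Bs = hd Cs"
    using disjointD[OF partition_onD2[OF Bs(2)]] hd_in_set[OF Bs(3)] hd_in_set[OF Cs(2)]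
      sets Bs(4) Cs(3) by blast
  then show "Bs = Cs" using list_eq_if_cyclic_successor_eq Bs(1,3) Cs(1) sets succ by blast
qed

lemma cyclic_of_list_image:
  assumes "finite A" "a \<in> A"
  shows "cyclic_of_list ` rooted_ordered_partitions A a = cyclic_partitions A"
proof
  show "cyclic_of_list ` rooted_ordered_partitions A a \<subseteq> cyclic_partitions A"
    by (auto simp: rooted_ordered_partitions_def ordered_partition_iff cyclic_of_list_def
        cyclic_partitions_def cyclic_successor_permutes cyclic_successor_transitive)
  show "cyclic_partitions A \<subseteq> cyclic_of_list ` rooted_ordered_partitions A a"
  proof
    fix Ps assume "Ps \<in> cyclic_partitions A"
    then obtain P s where Ps: "Ps = (P, s)" and P: "partition_on A P" and s: "s permutes P"
      and trans: "\<forall>B\<in>P. \<forall>C\<in>P. \<exists>n. (s ^^ n) B = C"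
      by (auto simp: cyclic_partitions_def)
    obtain B where B: "B \<in> P" "a \<in> B" using P \<open>a \<in> A\<close> by (auto simp: partition_on_def)
    moreover have "finite P" using finite_elements[OF \<open>finite A\<close> P] .
    ultimately obtain Bs where "distinct Bs" "set Bs = P" "hd Bs = B" "cyclic_successor Bs = s"
      using ex_list_cyclic_successor_eq[OF s _ trans] by blast
    with P B have "Bs \<in> rooted_ordered_partitions A a" "Ps = cyclic_of_list Bs"
      by (auto simp: rooted_ordered_partitions_def ordered_partition_iff Ps cyclic_of_list_def)
    then show "Ps \<in> cyclic_of_list ` rooted_ordered_partitions A a" by blast
  qed
qed

lemma bij_betw_cyclic_of_list:
  "finite A \<Longrightarrow> a \<in> A \<Longrightarrow>
     bij_betw cyclic_of_list (rooted_ordered_partitions A a) (cyclic_partitions A)"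
  by (simp add: bij_betw_def inj_on_cyclic_of_list cyclic_of_list_image)

lemma split_merge_in_rooted_ordered_partitions:
  "a \<in> J \<Longrightarrow> Bs \<in> rooted_ordered_partitions A a \<Longrightarrow> split_merge J Bs \<in> rooted_ordered_partitions A a"
  by (simp add: rooted_ordered_partitions_def ordered_partition_split_merge hd_split_merge)

lemma nblocks_cyclic_of_list: "distinct Bs \<Longrightarrow> nblocks (cyclic_of_list Bs) = length Bs"
  by (simp add: nblocks_def cyclic_of_list_def distinct_card)

lemma psiQ_tilde_cyclic_of_list:
  "distinct Bs \<Longrightarrow> psiQ_tilde \<psi> Q (cyclic_of_list Bs) = prod_list (map (psiQ \<psi> Q) Bs)"
  by (simp add: psiQ_tilde_def cyclic_of_list_def prod.distinct_set_conv_list)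

lemma psiQ_split:
  assumes "disjoint Q" "J \<in> Q" "\<psi> {} = 1"
  shows "psiQ \<psi> Q X = psiQ \<psi> Q (X \<inter> J) * psiQ \<psi> Q (X - J)"
proof -
  have "\<psi> (X \<inter> K) = \<psi> (X \<inter> J \<inter> K) * \<psi> ((X - J) \<inter> K)" if "K \<in> Q" for K
  proof (cases "K = J")
    case False
    then have "J \<inter> K = {}" using assms(1,2) \<open>K \<in> Q\<close> by (auto dest: disjointD)
    then have "X \<inter> J \<inter> K = {}" "(X - J) \<inter> K = X \<inter> K" by blast+
    then show ?thesis using assms(3) by simp
  next
    case True
    have "(X - J) \<inter> J = {}" by blast
    with True show ?thesis using assms(3) by simp
  qed
  then show ?thesis unfolding psiQ_def prod.distrib[symmetric] by (rule prod.cong[OF refl])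
qed

lemma nblocks_split_merge_parity:
  assumes "ordered_partition Bs A" "hd Bs \<inter> J \<noteq> {}" "\<not> A \<subseteq> J"
  shows "nblocks (cyclic_of_list (split_merge J Bs)) mod 2 = (nblocks (cyclic_of_list Bs) + 1) mod 2"
proof -
  have "distinct Bs" "distinct (split_merge J Bs)"
    using assms(1) ordered_partition_split_merge by (auto simp: ordered_partition_iff)
  then have "nblocks (cyclic_of_list (split_merge J Bs)) = length (split_merge J Bs)"
    "nblocks (cyclic_of_list Bs) = length Bs"
    by (simp_all add: nblocks_cyclic_of_list)
  with length_split_merge[OF assms] show ?thesis by presburger
qed

lemma psiQ_tilde_split_merge:
  assumes "ordered_partition Bs A" "disjoint Q" "J \<in> Q" "\<psi> {} = 1"
  shows "psiQ_tilde \<psi> Q (cyclic_of_list (split_merge J Bs)) = psiQ_tilde \<psi> Q (cyclic_of_list Bs)"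
proof -
  have "distinct Bs" "distinct (split_merge J Bs)"
    using assms(1) ordered_partition_split_merge by (auto simp: ordered_partition_iff)
  moreover have "prod_list (map (psiQ \<psi> Q) (split_merge J Bs)) = prod_list (map (psiQ \<psi> Q) Bs)"
    using prod_list_split_merge psiQ_split[where \<psi> = \<psi>, OF assms(2-4)] .
  ultimately show ?thesis by (simp add: psiQ_tilde_cyclic_of_list)
qed

lemma partition_on_not_subset_block:
  assumes "partition_on A Q" "J \<in> Q" "2 \<le> card Q"
  shows "\<not> A \<subseteq> J"
proof -
  obtain K where "K \<in> Q" "K \<noteq> J"
    using assms(3) card_le_Suc0_iff_eq[of Q] by (metis (no_types) card.infinite le_0_eq not_less_eq_eq
        numeral_2_eq_2 zero_neq_numeral)
  moreover have "K \<noteq> {}" "K \<subseteq> A" using \<open>K \<in> Q\<close> assms(1) by (auto simp: partition_on_def)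
  ultimately show ?thesis
    using disjointD[OF partition_onD2[OF assms(1)] assms(2)] by blast
qed

lemma bij_betw_conjugate_involution:
  assumes f: "bij_betw f A B" and g: "\<And>x. x \<in> A \<Longrightarrow> g x \<in> A" "\<And>x. x \<in> A \<Longrightarrow> g (g x) = x"
  obtains \<tau> where "bij_betw \<tau> B B" "\<And>x. x \<in> A \<Longrightarrow> \<tau> (f x) = f (g x)"
proof
  have "bij_betw g A A" using g by (intro bij_betw_byWitness[where f' = g]) auto
  then show "bij_betw (f \<circ> (g \<circ> inv_into A f)) B B"
    by (rule bij_betw_trans[OF bij_betw_trans[OF bij_betw_inv_into[OF f]] f])
  show "(f \<circ> (g \<circ> inv_into A f)) (f x) = f (g x)" if "x \<in> A" for x
    using f that by (simp add: bij_betw_def)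
qed

theorem lemma8p2:
  fixes r :: nat and Q :: "nat set set"
  assumes "r \<ge> 3"
    and "partition_on {1..r} Q"
    and "card Q \<ge> 2"
  shows "\<exists>\<tau>. bij_betw \<tau> (cyc_ord_partitions r) (cyc_ord_partitions r) \<and>
           (\<forall>P\<in>cyc_ord_partitions r. nblocks (\<tau> P) mod 2 = (nblocks P + 1) mod 2) \<and>
           (\<forall>\<psi> :: nat set \<Rightarrow> real. \<psi> {} = 1 \<longrightarrow>
              (\<forall>P\<in>cyc_ord_partitions r. psiQ_tilde \<psi> Q (\<tau> P) = psiQ_tilde \<psi> Q P))"
proof -
  let ?L = "rooted_ordered_partitions {1..r} 1"
  have "1 \<in> {1..r}" using assms(1) by simp
  then obtain J where J: "J \<in> Q" "1 \<in> J" using partition_onD1[OF assms(2)] by blast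
  have "cyc_ord_partitions r = cyclic_partitions {1..r}"
    by (simp add: cyc_ord_partitions_def cyclic_partitions_def)
  then have bij: "bij_betw cyclic_of_list ?L (cyc_ord_partitions r)"
    using bij_betw_cyclic_of_list[OF finite_atLeastAtMost \<open>1 \<in> {1..r}\<close>] by simp
  have L: "ordered_partition Bs {1..r}" "hd Bs \<inter> J \<noteq> {}" if "Bs \<in> ?L" for Bs
    using that J(2) by (auto simp: rooted_ordered_partitions_def)
  have involution: "split_merge J (split_merge J Bs) = Bs" if "Bs \<in> ?L" for Bs
    using split_merge_involution L(1)[OF that] .
  obtain \<tau> where \<tau>: "bij_betw \<tau> (cyc_ord_partitions r) (cyc_ord_partitions r)"
    and \<tau>_eq: "\<And>Bs. Bs \<in> ?L \<Longrightarrow> \<tau> (cyclic_of_list Bs) = cyclic_of_list (split_merge J Bs)"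
    using bij_betw_conjugate_involution[OF bij split_merge_in_rooted_ordered_partitions[OF J(2)]
        involution] by metis
  have "nblocks (\<tau> P) mod 2 = (nblocks P + 1) mod 2"
    and "\<psi> {} = 1 \<Longrightarrow> psiQ_tilde \<psi> Q (\<tau> P) = psiQ_tilde \<psi> Q P"
    if "P \<in> cyc_ord_partitions r" for P and \<psi> :: "nat set \<Rightarrow> real"
  proof -
    have "P \<in> cyclic_of_list ` ?L" using that bij_betw_imp_surj_on[OF bij] by simp
    then obtain Bs where Bs: "P = cyclic_of_list Bs" "Bs \<in> ?L" by (rule imageE)
    show "nblocks (\<tau> P) mod 2 = (nblocks P + 1) mod 2"
      using nblocks_split_merge_parity[OF L[OF Bs(2)]] Bs \<tau>_eq
        partition_on_not_subset_block[OF assms(2) J(1) assms(3)] by simp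
    show "psiQ_tilde \<psi> Q (\<tau> P) = psiQ_tilde \<psi> Q P" if "\<psi> {} = 1"
      using psiQ_tilde_split_merge[where \<psi> = \<psi>, OF L(1)[OF Bs(2)] partition_onD2[OF assms(2)]
          J(1) that] Bs \<tau>_eq by simp
  qed
  with \<tau> show ?thesis by blast
qed

end
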